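(* Assume $m=n$. Let $\mathbf g=(g_1,\dots,g_n)\in\mathbb F_{q^m}^n$ have $\mathbb F_q$-linearly independent coordinates, let $1\le k\le n$, and let $V\subseteq\mathbb F_{q^m}$ be an $\mathbb F_q$-subspace of dimension $s$ with $0<s<m$. Then there exists $Q\in\mathcal L_{q^m}$ of $q$-degree $m-s$ such that $$\mathcal G(\mathbf g,k)\cap V^n=\Bigl\{\bigl((Q\circ A)(g_1),\dots,(Q\circ A)(g_n)\bigr)\;:\;A\in\mathcal L_{q^m},\ \deg_q(A)<k-(m-s)\Bigr\}.$$
   Context: A $q$-polynomial over $\mathbb F_{q^m}$ is $P(x)=\sum_{i=0}^d a_ix^{q^i}$, $a_i\in\mathbb F_{q^m}$; its $q$-degree is the largest $i$ with $a_i\ne0$ ($-\infty$ for $P=0$). $\mathcal L_{q^m}$ is the ring of $q$-polynomials under addition and composition $\circ$. The Gabidulin code is $\mathcal G(\mathbf g,k)=\{(F(g_1),\dots,F(g_n)):F\in\mathcal L_{q^m},\ \deg_qF<k\}$ (equivalently generated by the rows of $(g_j^{q^i})_{0\le i<k,\,1\le j\le n}$). $V^n=V\times\cdots\times V$ ($n$ times). *)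

theory Defs
  imports "HOL-Computational_Algebra.Polynomial"
begin

text \<open>The ambient field F_{q^m} is a finite field type 'a with CARD('a) = q^m;
  its subfield F_q is the fixed field of the Frobenius x \<mapsto> x^q.\<close>

definition Fq :: "nat \<Rightarrow> 'a::field set" where
  "Fq q = {x. x ^ q = x}"

definition is_qpoly :: "nat \<Rightarrow> 'a::field poly \<Rightarrow> bool" where
  "is_qpoly q P \<longleftrightarrow> (\<forall>i. coeff P i \<noteq> 0 \<longrightarrow> (\<exists>j. i = q ^ j))"

text \<open>q-degree of a nonzero q-polynomial (degree P = q^(qdeg q P)).
  The zero polynomial (q-degree -infinity) is treated separately in statements.\<close>
definition qdeg :: "nat \<Rightarrow> 'a::field poly \<Rightarrow> nat" where
  "qdeg q P = (LEAST j. degree P = q ^ j)"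

definition Fq_lin_indep :: "nat \<Rightarrow> nat \<Rightarrow> (nat \<Rightarrow> 'a::field) \<Rightarrow> bool" where
  "Fq_lin_indep q n g \<longleftrightarrow>
     (\<forall>c. (\<forall>i<n. c i \<in> Fq q) \<and> (\<Sum>i<n. c i * g i) = 0 \<longrightarrow> (\<forall>i<n. c i = 0))"

definition Fq_span :: "nat \<Rightarrow> nat \<Rightarrow> (nat \<Rightarrow> 'a::field) \<Rightarrow> 'a set" where
  "Fq_span q s b = {x. \<exists>c. (\<forall>i<s. c i \<in> Fq q) \<and> x = (\<Sum>i<s. c i * b i)}"

definition Fq_subspace :: "nat \<Rightarrow> 'a::field set \<Rightarrow> bool" where
  "Fq_subspace q V \<longleftrightarrow> 0 \<in> V \<and> (\<forall>x\<in>V. \<forall>y\<in>V. x + y \<in> V)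
      \<and> (\<forall>c\<in>Fq q. \<forall>x\<in>V. c * x \<in> V)"

definition Fq_dim :: "nat \<Rightarrow> 'a::field set \<Rightarrow> nat \<Rightarrow> bool" where
  "Fq_dim q V s \<longleftrightarrow> (\<exists>b. Fq_lin_indep q s b \<and> Fq_span q s b = V)"

definition gabidulin :: "nat \<Rightarrow> nat \<Rightarrow> (nat \<Rightarrow> 'a::field) \<Rightarrow> nat \<Rightarrow> 'a list set" where
  "gabidulin q n g k = {map (\<lambda>j. poly F (g j)) [0..<n] | F.
       is_qpoly q F \<and> (F = 0 \<or> qdeg q F < k)}"

definition vpow :: "'a set \<Rightarrow> nat \<Rightarrow> 'a list set" where
  "vpow V n = {v. length v = n \<and> set v \<subseteq> V}"

end

(*
  Let L be the subspace polynomial of V, a q-polynomial of q-degree s whose roots are exactly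
  the elements of V.  The remainder of the right division of X^(q^m) - X by L has degree < q^s
  and vanishes on the q^s points of V, so X^(q^m) - X = Q \<circ> L; as X^(q^m) - X is central in the
  ring of q-polynomials, also L \<circ> Q = X^(q^m) - X.  Hence Q has q-degree m - s and maps
  F_(q^m) into V, which gives one inclusion.  Conversely, since m = n the g_j span F_(q^m), so a
  codeword F with F(g_j) \<in> V for all j maps all of F_(q^m) into V.  Then L \<circ> F vanishes
  identically, is therefore a right multiple A' \<circ> (X^(q^m) - X) = L \<circ> Q \<circ> A', and cancelling L
  gives F = Q \<circ> A' with q-degree of A' equal to q-degree of F minus m - s.
*)
theory Submission
  imports Defs "HOL-Algebra.Sylow" "HOL-Algebra.FiniteProduct"
begin

lemma pcompose_monom: "pcompose (monom a n) A = smult a (A ^ n)"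
  by (induction n) (simp_all add: monom_0 monom_Suc pcompose_pCons)

lemma degree_monom_diff_monom_1:
  "N > 1 \<Longrightarrow> degree (monom (1::'a::field) N - monom c 1) = N"
  using degree_add_eq_left[of "- monom c 1" "monom (1::'a) N"] degree_monom_le[of c 1]
  by (simp add: degree_monom_eq)

section \<open>Finite fields\<close>

lemma eq_power_multiplicity_if_unique_prime_divisor:
  fixes n p :: nat
  assumes "n > 0" "prime p" "\<And>r. prime r \<Longrightarrow> r dvd n \<Longrightarrow> r = p"
  shows "n = p ^ multiplicity p n"
proof (rule multiplicity_eq_nat)
  fix r :: nat assume r: "prime r"
  show "multiplicity r n = multiplicity r (p ^ multiplicity p n)"
  proof (cases "r = p")
    case False
    then have "\<not> r dvd n" using assms(3) r by blast
    then show ?thesis using False r assms(2)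
      by (simp add: not_dvd_imp_multiplicity_0 multiplicity_distinct_prime_power)
  qed (use r in \<open>simp add: prime_imp_prime_elem\<close>)
qed (use assms in \<open>simp_all add: prime_gt_0_nat\<close>)

lemma add_monoid_pow_eq_of_nat_mult:
  "x [^]\<^bsub>\<lparr>carrier = H, mult = (+), one = 0\<rparr>\<^esub> j = of_nat j * (x :: 'a::ring_1)"
  by (induction j) (simp_all add: algebra_simps)

lemma prime_dvd_card_field_imp_eq_CHAR:
  fixes r :: nat
  assumes r: "prime r" "r dvd card (UNIV :: 'a::{finite,field} set)"
  shows "r = CHAR('a)"
proof (rule ccontr)
  assume "r \<noteq> CHAR('a)"
  moreover have "prime CHAR('a)"
    by (simp add: finite_imp_CHAR_pos prime_CHAR_semidom)
  ultimately have "\<not> CHAR('a) dvd r ^ a" for a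
    using r(1) by (metis prime_dvd_power primes_dvd_imp_eq)
  then have of_nat_nonzero: "of_nat (r ^ a) \<noteq> (0::'a)" for a
    by (metis of_nat_eq_0_iff_char_dvd)
  define G :: "'a monoid" where "G = \<lparr>carrier = UNIV, mult = (+), one = 0\<rparr>"
  have G: "comm_group G"
    unfolding G_def by (rule comm_groupI) (auto simp: add_ac intro: exI[of _ "- x" for x])
  define a where "a = multiplicity r (card (UNIV :: 'a set))"
  have "order G = r ^ a * (card (UNIV :: 'a set) div r ^ a)"
    by (simp add: G_def order_def a_def multiplicity_dvd)
  then obtain H where H: "subgroup H G" "card H = r ^ a"
    using sylow_thm[OF r(1) comm_group.axioms(2)[OF G]] by (auto simp: G_def)
  interpret H: group "G\<lparr>carrier := H\<rparr>"
    by (rule subgroup.subgroup_is_group[OF H(1) comm_group.axioms(2)[OF G]])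
  interpret H: comm_group "G\<lparr>carrier := H\<rparr>"
    by (rule H.group_comm_groupI) (simp add: G_def add.commute)
  \<comment> \<open>Every element of the Sylow r-subgroup is killed by the unit r^a, so it is trivial.\<close>
  have "H \<subseteq> {0}"
  proof
    fix x assume "x \<in> H"
    then have "of_nat (r ^ a) * x = 0"
      using H.power_order_eq_one[of x] H(2) by (simp add: G_def add_monoid_pow_eq_of_nat_mult)
    then show "x \<in> {0}" by (metis of_nat_nonzero mult_eq_0_iff singletonI)
  qed
  then have "card H \<le> 1"
    using card_mono[of "{0}" H] by simp
  moreover have "a > 0" using r by (simp add: a_def prime_multiplicity_gt_zero_iff)
  ultimately show False
    using H(2) one_less_power[OF prime_gt_1_nat[OF r(1)], of a] by simp
qed

text \<open>The library's finite_field_power_card_eq_same needs sort finite_field, which the type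
  variable of sort {finite, field} used here does not have.\<close>

lemma field_power_card_eq_self:
  fixes x :: "'a::{finite,field}"
  shows "x ^ card (UNIV :: 'a set) = x"
proof (cases "x = 0")
  case False
  define G :: "'a monoid" where "G = \<lparr>carrier = - {0}, mult = (*), one = 1\<rparr>"
  have "comm_group G"
  proof (rule comm_groupI)
    fix y assume "y \<in> carrier G"
    then show "\<exists>z\<in>carrier G. z \<otimes>\<^bsub>G\<^esub> y = \<one>\<^bsub>G\<^esub>"
      by (intro bexI[of _ "inverse y"]) (auto simp: G_def)
  qed (auto simp: G_def mult_ac)
  moreover have "x [^]\<^bsub>G\<^esub> j = x ^ j" for j by (induction j) (simp_all add: G_def)
  ultimately have "x ^ card (- {0::'a}) = 1"
    using comm_group.power_order_eq_one[of G x] False by (simp add: G_def)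
  moreover have "card (UNIV :: 'a set) = Suc (card (- {0::'a}))"
    using card_Suc_Diff1[of UNIV "0::'a"] by (simp add: Compl_eq_Diff_UNIV)
  ultimately show ?thesis by simp
qed (simp add: finite_UNIV_card_ge_0)

locale qm_field =
  fixes q m :: nat and ty :: "'a::{finite,field} itself"
  assumes card: "card (UNIV :: 'a set) = q ^ m" and m_pos: "m > 0"
begin

lemma q_gt_1: "q > 1"
proof (rule ccontr)
  assume "\<not> q > 1"
  then have "card (UNIV :: 'a set) \<le> 1"
    using card power_le_one[of q m] by (cases "q = 0") (simp_all add: power_0_left)
  moreover have "card {0::'a, 1} \<le> card (UNIV :: 'a set)" by (rule card_mono) auto
  ultimately show False by simp
qed

lemma q_pos: "q > 0"
  using q_gt_1 by simp

lemma q_eq_CHAR_power: "q = CHAR('a) ^ multiplicity CHAR('a) q"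
proof (rule eq_power_multiplicity_if_unique_prime_divisor[OF q_pos])
  show "prime CHAR('a)" by (simp add: finite_imp_CHAR_pos prime_CHAR_semidom)
  fix r assume r: "prime r" "r dvd q"
  then have "r dvd card (UNIV :: 'a set)" using card m_pos dvd_power[of m q] dvd_trans by metis
  then show "r = CHAR('a)" using prime_dvd_card_field_imp_eq_CHAR r(1) by blast
qed

text \<open>Stated for every ring of the ambient characteristic, so that it applies to 'a and to 'a poly.\<close>

lemma frobenius_add:
  fixes x y :: "'b::comm_semiring_1"
  assumes "CHAR('b) = CHAR('a)"
  shows "(x + y) ^ (q ^ j) = x ^ (q ^ j) + y ^ (q ^ j)"
proof -
  have "q ^ j = CHAR('b) ^ (multiplicity CHAR('a) q * j)"
    using q_eq_CHAR_power assms by (metis power_mult)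
  then show ?thesis
    using assms by (intro freshmans_dream') (simp_all add: finite_imp_CHAR_pos prime_CHAR_semidom)
qed

lemma frobenius_sum:
  fixes f :: "'c \<Rightarrow> 'b::comm_semiring_1"
  assumes "CHAR('b) = CHAR('a)"
  shows "(sum f A) ^ (q ^ j) = (\<Sum>i\<in>A. f i ^ (q ^ j))"
proof -
  have "q ^ j = CHAR('b) ^ (multiplicity CHAR('a) q * j)"
    using q_eq_CHAR_power assms by (metis power_mult)
  then show ?thesis
    using assms by (intro freshmans_dream_sum') (simp_all add: finite_imp_CHAR_pos prime_CHAR_semidom)
qed

lemma frobenius_diff:
  fixes x y :: "'b::comm_ring_1"
  assumes "CHAR('b) = CHAR('a)"
  shows "(x - y) ^ (q ^ j) = x ^ (q ^ j) - y ^ (q ^ j)"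
  using frobenius_add[OF assms, of "x - y" y j] by (simp add: algebra_simps)

lemma power_q_power_m: "x ^ (q ^ m) = (x::'a)"
  using field_power_card_eq_self[of x] card by simp

lemma Fq_power: "(c::'a) \<in> Fq q \<Longrightarrow> c ^ (q ^ j) = c"
  by (induction j) (simp_all add: Fq_def power_mult)

lemma zero_in_Fq: "(0::'a) \<in> Fq q"
  using q_pos by (simp add: Fq_def)

lemma Fq_diff: "(c::'a) \<in> Fq q \<Longrightarrow> d \<in> Fq q \<Longrightarrow> c - d \<in> Fq q"
  using frobenius_diff[of c d 1] by (simp add: Fq_def)

section \<open>q-polynomials\<close>

lemma power_q_inject: "q ^ i = q ^ j \<longleftrightarrow> i = j"
  using q_gt_1 by (simp add: power_inject_exp)

lemma power_q_le_iff: "q ^ i \<le> q ^ j \<longleftrightarrow> i \<le> j"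
  using q_gt_1 by (simp add: power_increasing_iff)

lemma less_power_q: "n < q ^ n"
  by (rule less_le_trans[OF less_exp power_mono]) (use q_gt_1 in auto)

definition qpoly_of_coeffs :: "(nat \<Rightarrow> 'a) \<Rightarrow> nat \<Rightarrow> 'a poly" where
  "qpoly_of_coeffs c N = (\<Sum>j<N. monom (c j) (q ^ j))"

lemma coeff_qpoly_of_coeffs_power:
  "coeff (qpoly_of_coeffs c N) (q ^ j) = (if j < N then c j else 0)"
proof -
  have "coeff (qpoly_of_coeffs c N) (q ^ j) = (\<Sum>i<N. if i = j then c i else 0)"
    unfolding qpoly_of_coeffs_def coeff_sum
    by (intro sum.cong) (auto simp: coeff_monom power_q_inject)
  then show ?thesis by simp
qed

lemma coeff_qpoly_of_coeffs_nonpower: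
  "(\<And>j. i \<noteq> q ^ j) \<Longrightarrow> coeff (qpoly_of_coeffs c N) i = 0"
  unfolding qpoly_of_coeffs_def coeff_sum by (intro sum.neutral) (auto simp: coeff_monom)

lemma poly_qpoly_of_coeffs: "poly (qpoly_of_coeffs c N) x = (\<Sum>j<N. c j * x ^ (q ^ j))"
  unfolding qpoly_of_coeffs_def by (simp add: poly_sum poly_monom)

lemma qpoly_expansion:
  assumes "is_qpoly q (P::'a poly)"
  shows "P = qpoly_of_coeffs (\<lambda>j. coeff P (q ^ j)) (degree P)"
proof (rule poly_eqI)
  fix i
  show "coeff P i = coeff (qpoly_of_coeffs (\<lambda>j. coeff P (q ^ j)) (degree P)) i"
  proof (cases "\<exists>j. i = q ^ j")
    case True
    then obtain j where j: "i = q ^ j" by blast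
    show ?thesis
    proof (cases "j < degree P")
      case False
      then have "degree P < q ^ j"
        using less_power_q[of "degree P"] power_q_le_iff[of "degree P" j] by linarith
      then show ?thesis using j False by (simp add: coeff_eq_0 coeff_qpoly_of_coeffs_power)
    qed (simp add: j coeff_qpoly_of_coeffs_power)
  next
    case False
    then show ?thesis
      using assms coeff_qpoly_of_coeffs_nonpower unfolding is_qpoly_def by metis
  qed
qed

lemma is_qpoly_0: "is_qpoly q (0::'a poly)"
  by (simp add: is_qpoly_def)

lemma is_qpoly_add: "is_qpoly q (P::'a poly) \<Longrightarrow> is_qpoly q R \<Longrightarrow> is_qpoly q (P + R)"
  unfolding is_qpoly_def by (metis add.right_neutral coeff_add)

lemma is_qpoly_diff: "is_qpoly q (P::'a poly) \<Longrightarrow> is_qpoly q R \<Longrightarrow> is_qpoly q (P - R)"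
  unfolding is_qpoly_def by (metis coeff_diff diff_zero diff_self)

lemma is_qpoly_smult: "is_qpoly q (P::'a poly) \<Longrightarrow> is_qpoly q (smult a P)"
  unfolding is_qpoly_def by fastforce

lemma is_qpoly_monom: "is_qpoly q (monom (a::'a) (q ^ j))"
  unfolding is_qpoly_def by (auto simp: coeff_monom)

lemma is_qpoly_sum: "(\<And>i. i \<in> A \<Longrightarrow> is_qpoly q (f i :: 'a poly)) \<Longrightarrow> is_qpoly q (sum f A)"
  by (induction A rule: infinite_finite_induct) (auto simp: is_qpoly_0 is_qpoly_add)

lemma qpoly_coeff_0: "is_qpoly q (P::'a poly) \<Longrightarrow> coeff P 0 = 0"
  unfolding is_qpoly_def using q_pos by (metis less_numeral_extra(3) power_eq_0_iff)

lemma qpoly_poly_0: "is_qpoly q (P::'a poly) \<Longrightarrow> poly P 0 = 0"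
  by (simp add: poly_0_coeff_0 qpoly_coeff_0)

lemma qpoly_degree_pos: "is_qpoly q (P::'a poly) \<Longrightarrow> P \<noteq> 0 \<Longrightarrow> degree P > 0"
  by (metis qpoly_coeff_0 degree_0_id pCons_0_0 neq0_conv)

lemma degree_qpoly: "is_qpoly q (P::'a poly) \<Longrightarrow> P \<noteq> 0 \<Longrightarrow> degree P = q ^ qdeg q P"
  unfolding qdeg_def is_qpoly_def by (rule LeastI_ex) simp

lemma qdeg_eqI: "degree (P::'a poly) = q ^ j \<Longrightarrow> qdeg q P = j"
  unfolding qdeg_def by (rule Least_equality) (auto simp: power_q_inject)

lemma poly_qpoly_expansion: "is_qpoly q (P::'a poly) \<Longrightarrow>
    poly P x = (\<Sum>j<degree P. coeff P (q ^ j) * x ^ (q ^ j))"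
  by (subst qpoly_expansion) (simp_all add: poly_qpoly_of_coeffs)

lemma poly_qpoly_add: "is_qpoly q (P::'a poly) \<Longrightarrow> poly P (x + y) = poly P x + poly P y"
  by (simp add: poly_qpoly_expansion frobenius_add distrib_left sum.distrib)

lemma poly_qpoly_diff: "is_qpoly q (P::'a poly) \<Longrightarrow> poly P (x - y) = poly P x - poly P y"
  using poly_qpoly_add[of P "x - y" y] by simp

lemma poly_qpoly_Fq_mult:
  "is_qpoly q (P::'a poly) \<Longrightarrow> c \<in> Fq q \<Longrightarrow> poly P (c * x) = c * poly P x"
  by (simp add: poly_qpoly_expansion power_mult_distrib Fq_power sum_distrib_left mult_ac)

lemma poly_qpoly_sum: "is_qpoly q (P::'a poly) \<Longrightarrow> poly P (sum f A) = (\<Sum>i\<in>A. poly P (f i))"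
  by (induction A rule: infinite_finite_induct) (simp_all add: qpoly_poly_0 poly_qpoly_add)

lemma qpoly_power:
  assumes "is_qpoly q (A::'a poly)"
  shows "A ^ (q ^ j) = (\<Sum>i<degree A. monom (coeff A (q ^ i) ^ (q ^ j)) (q ^ (i + j)))"
proof -
  have "A ^ (q ^ j) = (\<Sum>i<degree A. monom (coeff A (q ^ i)) (q ^ i)) ^ (q ^ j)"
    by (subst qpoly_expansion[OF assms]) (simp add: qpoly_of_coeffs_def)
  also have "\<dots> = (\<Sum>i<degree A. monom (coeff A (q ^ i)) (q ^ i) ^ (q ^ j))"
    by (simp add: frobenius_sum)
  finally show ?thesis by (simp add: monom_power power_add)
qed

lemma pcompose_qpoly_expansion: "is_qpoly q (P::'a poly) \<Longrightarrow>
   pcompose P A = (\<Sum>j<degree P. smult (coeff P (q ^ j)) (A ^ (q ^ j)))"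
  by (subst qpoly_expansion) (simp_all add: qpoly_of_coeffs_def pcompose_sum pcompose_monom)

lemma is_qpoly_pcompose:
  assumes "is_qpoly q (P::'a poly)" "is_qpoly q A"
  shows "is_qpoly q (pcompose P A)"
proof -
  have "is_qpoly q (A ^ (q ^ j))" for j
    by (subst qpoly_power[OF assms(2)]) (auto intro!: is_qpoly_sum is_qpoly_monom)
  then show ?thesis
    by (simp add: pcompose_qpoly_expansion[OF assms(1)] is_qpoly_sum is_qpoly_smult)
qed

lemma pcompose_qpoly_diff_right: "is_qpoly q (P::'a poly) \<Longrightarrow>
    pcompose P (A - B) = pcompose P A - pcompose P B"
  by (simp add: pcompose_qpoly_expansion frobenius_diff smult_diff_right sum_subtractf)

lemma pcompose_qpoly_eq_0_imp:
  assumes "is_qpoly q (Q::'a poly)" "Q \<noteq> 0" "is_qpoly q D" "pcompose Q D = 0"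
  shows "D = 0"
proof -
  have "degree Q * degree D = 0" using assms(4) by (metis degree_pcompose degree_0)
  then have "degree D = 0" using qpoly_degree_pos[OF assms(1,2)] by simp
  then show ?thesis using assms(3) qpoly_degree_pos by (metis less_irrefl)
qed

lemma pcompose_qpoly_left_cancel:
  assumes "is_qpoly q (Q::'a poly)" "Q \<noteq> 0" "is_qpoly q A" "is_qpoly q B"
    "pcompose Q A = pcompose Q B"
  shows "A = B"
  using pcompose_qpoly_eq_0_imp[OF assms(1,2) is_qpoly_diff[OF assms(3,4)]] assms(5)
  by (simp add: pcompose_qpoly_diff_right[OF assms(1)])

lemma qdeg_pcompose:
  assumes "is_qpoly q (Q::'a poly)" "Q \<noteq> 0" "is_qpoly q A" "A \<noteq> 0"
  shows "pcompose Q A \<noteq> 0" "qdeg q (pcompose Q A) = qdeg q Q + qdeg q A"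
proof -
  show "pcompose Q A \<noteq> 0" using pcompose_qpoly_eq_0_imp assms by blast
  have "degree (pcompose Q A) = q ^ (qdeg q Q + qdeg q A)"
    by (simp add: degree_pcompose degree_qpoly assms power_add)
  then show "qdeg q (pcompose Q A) = qdeg q Q + qdeg q A" by (rule qdeg_eqI)
qed

lemma qpoly_reduce_leading_term:
  fixes P D :: "'a poly"
  assumes P: "is_qpoly q P" "P \<noteq> 0" and D: "is_qpoly q D" "D \<noteq> 0"
    and "degree D \<le> degree P"
  shows "\<exists>T. is_qpoly q T \<and> is_qpoly q (P - pcompose T D) \<and> degree (P - pcompose T D) < degree P"
proof -
  obtain e where e: "qdeg q P = e + qdeg q D"
    using assms(5) degree_qpoly[OF P] degree_qpoly[OF D]
    by (metis power_q_le_iff le_add_diff_inverse2)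
  \<comment> \<open>T \<circ> D has the same leading term as P.\<close>
  define T where "T = monom (lead_coeff P / lead_coeff D ^ (q ^ e)) (q ^ e)"
  have T: "is_qpoly q T" unfolding T_def by (rule is_qpoly_monom)
  have TD: "pcompose T D = smult (lead_coeff P / lead_coeff D ^ (q ^ e)) (D ^ (q ^ e))"
    unfolding T_def by (rule pcompose_monom)
  have "lead_coeff P \<noteq> 0" "lead_coeff D \<noteq> 0" using P(2) D(2) by simp_all
  then have "degree (pcompose T D) = degree D * q ^ e"
    using D(2) by (simp add: TD degree_power_eq)
  then have degree_TD: "degree (pcompose T D) = degree P"
    using degree_qpoly[OF P] degree_qpoly[OF D] e by (simp add: power_add)
  have "lead_coeff (pcompose T D) = lead_coeff P"
    using D(2) by (simp add: TD lead_coeff_power)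
  then have "coeff (P - pcompose T D) (degree P) = 0"
    using degree_TD by simp
  moreover have "degree (P - pcompose T D) \<le> degree P"
    using degree_diff_le[of P "degree P" "pcompose T D"] degree_TD by simp
  ultimately have "degree (P - pcompose T D) < degree P"
    using qpoly_degree_pos[OF P] by (metis degree_0 leading_coeff_0_iff order_le_neq_trans)
  moreover have "is_qpoly q (P - pcompose T D)"
    by (intro is_qpoly_diff P(1) is_qpoly_pcompose T D(1))
  ultimately show ?thesis using T by blast
qed

lemma qpoly_right_division:
  fixes P D :: "'a poly"
  assumes "is_qpoly q P" "is_qpoly q D" "D \<noteq> 0"
  shows "\<exists>B R. is_qpoly q B \<and> is_qpoly q R \<and> P = pcompose B D + R \<and> (R = 0 \<or> degree R < degree D)"
  using assms(1)
proof (induction "degree P" arbitrary: P rule: less_induct)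
  case (less P)
  show ?case
  proof (cases "P = 0 \<or> degree P < degree D")
    case True
    then show ?thesis using less.prems by (intro exI[of _ 0] exI[of _ P]) (auto simp: is_qpoly_0)
  next
    case False
    then obtain T where T: "is_qpoly q T" "is_qpoly q (P - pcompose T D)"
      "degree (P - pcompose T D) < degree P"
      using qpoly_reduce_leading_term[OF less.prems _ assms(2,3)] by auto
    then obtain B R where BR: "is_qpoly q B" "is_qpoly q R"
      "P - pcompose T D = pcompose B D + R" "R = 0 \<or> degree R < degree D"
      using less.hyps by blast
    then have "P = pcompose (B + T) D + R"
      by (simp add: pcompose_add algebra_simps)
    then show ?thesis using BR is_qpoly_add[OF BR(1) T(1)] by blast
  qed
qed

lemma qpoly_right_dvd_if_vanishing:
  fixes P D :: "'a poly"
  assumes "is_qpoly q P" "is_qpoly q D" "D \<noteq> 0" "degree D \<le> card S"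
    and "\<And>x. x \<in> S \<Longrightarrow> poly D x = 0" "\<And>x. x \<in> S \<Longrightarrow> poly P x = 0"
  shows "\<exists>B. is_qpoly q B \<and> P = pcompose B D"
proof -
  obtain B R where BR: "is_qpoly q B" "is_qpoly q R" "P = pcompose B D + R"
    "R = 0 \<or> degree R < degree D"
    using qpoly_right_division[OF assms(1-3)] by blast
  have "R = 0"
  proof (rule ccontr)
    assume "R \<noteq> 0"
    have "S \<subseteq> {x. poly R x = 0}"
      using BR(3) assms(5,6) by (auto simp: poly_pcompose qpoly_poly_0[OF BR(1)])
    then have "card S \<le> degree R"
      using card_mono[OF poly_roots_finite[OF \<open>R \<noteq> 0\<close>]] card_poly_roots_bound[OF \<open>R \<noteq> 0\<close>]
      by (meson le_trans)
    then show False using BR(4) assms(4) \<open>R \<noteq> 0\<close> by linarith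
  qed
  then show ?thesis using BR by auto
qed

definition Xqm :: "'a poly" where
  "Xqm = monom 1 (q ^ m) - monom 1 1"

lemma is_qpoly_Xqm: "is_qpoly q Xqm"
  unfolding Xqm_def using is_qpoly_monom[of 1 m] is_qpoly_monom[of 1 0]
  by (intro is_qpoly_diff) simp_all

lemma poly_Xqm: "poly Xqm x = 0"
  by (simp add: Xqm_def poly_monom power_q_power_m)

lemma degree_Xqm: "degree Xqm = q ^ m"
proof -
  have "1 < q ^ m" using one_less_power[OF q_gt_1 m_pos] .
  then show ?thesis
    using degree_add_eq_left[of "- monom 1 1" "monom (1::'a) (q ^ m)"]
    by (simp add: Xqm_def degree_monom_eq)
qed

lemma Xqm_nonzero: "Xqm \<noteq> 0"
  using degree_Xqm q_pos by (metis degree_0 power_not_zero less_numeral_extra(3))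

text \<open>Xqm is central because x \<mapsto> x^(q^m) fixes every coefficient of A.\<close>

lemma pcompose_Xqm_commute:
  assumes "is_qpoly q A"
  shows "pcompose Xqm A = pcompose A Xqm"
proof -
  have "pcompose A Xqm = (\<Sum>j<degree A. smult (coeff A (q ^ j)) (Xqm ^ (q ^ j)))"
    by (rule pcompose_qpoly_expansion[OF assms])
  also have "\<dots> = (\<Sum>j<degree A. monom (coeff A (q ^ j)) (q ^ (j + m)) - monom (coeff A (q ^ j)) (q ^ j))"
    by (intro sum.cong refl)
       (simp add: Xqm_def frobenius_diff monom_power smult_monom power_add mult_ac smult_diff_right)
  also have "\<dots> = A ^ (q ^ m) - A"
    by (subst (3) qpoly_expansion[OF assms])
       (simp add: qpoly_power[OF assms] power_q_power_m qpoly_of_coeffs_def sum_subtractf)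
  also have "\<dots> = pcompose Xqm A"
    by (simp add: Xqm_def pcompose_diff pcompose_monom)
  finally show ?thesis ..
qed

section \<open>Cardinalities of F_q and of F_q-spans\<close>

lemma card_Fq_le: "card (Fq q :: 'a set) \<le> q"
proof -
  define P :: "'a poly" where "P = monom 1 q - monom 1 1"
  have "degree P = q" unfolding P_def using q_gt_1 by (rule degree_monom_diff_monom_1)
  moreover have "Fq q = {x. poly P x = 0}" unfolding P_def Fq_def by (simp add: poly_monom)
  ultimately show ?thesis using card_poly_roots_bound[of P] q_pos by fastforce
qed

text \<open>The trace polynomial \<Sum>j<m. X^(q^j) vanishes on every x^q - x, by telescoping.\<close>

lemma card_range_Artin_Schreier_le: "card (range (\<lambda>x::'a. x ^ q - x)) \<le> q ^ (m - 1)"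
proof -
  define T where "T = qpoly_of_coeffs (\<lambda>_. 1) m"
  have "poly T (x ^ q - x) = 0" for x
  proof -
    have "poly T (x ^ q - x) = (\<Sum>j<m. (x ^ q) ^ (q ^ j) - x ^ (q ^ j))"
      unfolding T_def poly_qpoly_of_coeffs by (simp add: frobenius_diff)
    also have "\<dots> = (\<Sum>j<m. x ^ (q ^ Suc j) - x ^ (q ^ j))"
      by (simp add: power_mult)
    also have "\<dots> = x ^ (q ^ m) - x ^ (q ^ 0)" by (rule sum_lessThan_telescope)
    finally show ?thesis by (simp add: power_q_power_m)
  qed
  then have roots: "range (\<lambda>x. x ^ q - x) \<subseteq> {y. poly T y = 0}" by auto
  have T: "T \<noteq> 0"
    using coeff_qpoly_of_coeffs_power[of "\<lambda>_. 1" m "m - 1"] m_pos by (auto simp: T_def)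
  have degree_T: "degree T \<le> q ^ (m - 1)"
    unfolding T_def qpoly_of_coeffs_def
    by (intro degree_sum_le) (auto intro: order_trans[OF degree_monom_le] simp: power_q_le_iff)
  have "card (range (\<lambda>x::'a. x ^ q - x)) \<le> card {y. poly T y = 0}"
    by (rule card_mono[OF poly_roots_finite[OF T] roots])
  also have "\<dots> \<le> degree T" by (rule card_poly_roots_bound[OF T])
  finally show ?thesis using degree_T by simp
qed

lemma card_Artin_Schreier_fibre_le: "card {x::'a. x ^ q - x = y} \<le> card (Fq q :: 'a set)"
proof (cases "\<exists>x0. x0 ^ q - x0 = y")
  case True
  then obtain x0 where x0: "x0 ^ q - x0 = y" by blast
  have "x - x0 \<in> Fq q" if "x ^ q - x = y" for x
  proof -
    have "x ^ q = y + x" "x0 ^ q = y + x0" using that x0 by (simp_all add: diff_eq_eq)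
    moreover have "(x - x0) ^ q = x ^ q - x0 ^ q" using frobenius_diff[of x x0 1] by simp
    ultimately have "(x - x0) ^ q = x - x0" by simp
    then show ?thesis by (simp add: Fq_def)
  qed
  then have "(\<lambda>x. x - x0) ` {x. x ^ q - x = y} \<subseteq> Fq q" by blast
  moreover have "inj_on (\<lambda>x. x - x0) {x. x ^ q - x = y}" by (rule inj_onI) simp
  ultimately show ?thesis by (intro card_inj_on_le) auto
qed simp

lemma card_Fq: "card (Fq q :: 'a set) = q"
proof -
  let ?\<phi> = "\<lambda>x::'a. x ^ q - x"
  have "(\<Union>y\<in>range ?\<phi>. {x. ?\<phi> x = y}) = UNIV" by auto
  then have "q * q ^ (m - 1) = card (\<Union>y\<in>range ?\<phi>. {x. ?\<phi> x = y})"
    using card m_pos by (simp add: power_eq_if[of q m])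
  also have "\<dots> \<le> (\<Sum>y\<in>range ?\<phi>. card {x. ?\<phi> x = y})" by (rule card_UN_le) simp
  also have "\<dots> \<le> (\<Sum>y\<in>range ?\<phi>. card (Fq q :: 'a set))"
    by (rule sum_mono) (rule card_Artin_Schreier_fibre_le)
  also have "\<dots> = card (range ?\<phi>) * card (Fq q :: 'a set)" by simp
  also have "\<dots> \<le> q ^ (m - 1) * card (Fq q :: 'a set)"
    by (rule mult_le_mono1[OF card_range_Artin_Schreier_le])
  finally have "q \<le> card (Fq q :: 'a set)" using q_pos by (simp add: mult.commute)
  then show ?thesis using card_Fq_le by simp
qed

lemma Fq_span_eq_image:
  "Fq_span q s (b :: nat \<Rightarrow> 'a) = (\<lambda>c. \<Sum>j<s. c j * b j) ` (PiE {..<s} (\<lambda>_. Fq q))"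
proof
  show "Fq_span q s b \<subseteq> (\<lambda>c. \<Sum>j<s. c j * b j) ` (PiE {..<s} (\<lambda>_. Fq q))"
  proof
    fix x assume "x \<in> Fq_span q s b"
    then obtain c where c: "\<forall>i<s. c i \<in> Fq q" "x = (\<Sum>i<s. c i * b i)"
      unfolding Fq_span_def by blast
    have "restrict c {..<s} \<in> PiE {..<s} (\<lambda>_. Fq q)" using c(1) by auto
    moreover have "x = (\<Sum>j<s. restrict c {..<s} j * b j)" using c(2) by simp
    ultimately show "x \<in> (\<lambda>c. \<Sum>j<s. c j * b j) ` (PiE {..<s} (\<lambda>_. Fq q))" by blast
  qed
qed (unfold Fq_span_def, auto simp: PiE_def Pi_def)

lemma card_Fq_span:
  assumes "Fq_lin_indep q s (b :: nat \<Rightarrow> 'a)"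
  shows "card (Fq_span q s b) = q ^ s"
proof -
  have "inj_on (\<lambda>c. \<Sum>j<s. c j * b j) (PiE {..<s} (\<lambda>_. Fq q))"
  proof (rule inj_onI)
    fix c d assume cd: "c \<in> PiE {..<s} (\<lambda>_. Fq q)" "d \<in> PiE {..<s} (\<lambda>_. Fq q)"
      and "(\<Sum>j<s. c j * b j) = (\<Sum>j<s. d j * b j)"
    then have "(\<Sum>j<s. (c j - d j) * b j) = 0"
      by (simp add: left_diff_distrib sum_subtractf)
    moreover have "\<forall>i<s. c i - d i \<in> Fq q" using cd by (auto intro!: Fq_diff)
    ultimately have "\<forall>i<s. c i - d i = 0"
      using assms unfolding Fq_lin_indep_def by (elim allE[of _ "\<lambda>j. c j - d j"]) blast
    then show "c = d" using cd by (intro PiE_ext) auto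
  qed
  then have "card (Fq_span q s b) = card (PiE {..<s} (\<lambda>_. Fq q :: 'a set))"
    unfolding Fq_span_eq_image by (rule card_image)
  then show ?thesis by (simp add: card_PiE card_Fq)
qed

lemma Fq_span_0: "Fq_span q 0 (b :: nat \<Rightarrow> 'a) = {0}"
  unfolding Fq_span_def by auto

lemma Fq_span_Suc: "x \<in> Fq_span q (Suc i) (b :: nat \<Rightarrow> 'a) \<longleftrightarrow>
    (\<exists>c\<in>Fq q. x - c * b i \<in> Fq_span q i b)"
proof
  assume "x \<in> Fq_span q (Suc i) b"
  then obtain c where c: "\<forall>j<Suc i. c j \<in> Fq q" "x = (\<Sum>j<Suc i. c j * b j)"
    unfolding Fq_span_def by blast
  then have "x - c i * b i \<in> Fq_span q i b"
    unfolding Fq_span_def by (intro CollectI exI[of _ c]) simp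
  then show "\<exists>c\<in>Fq q. x - c * b i \<in> Fq_span q i b" using c(1) by blast
next
  assume "\<exists>c\<in>Fq q. x - c * b i \<in> Fq_span q i b"
  then obtain c where c: "c \<in> Fq q" "x - c * b i \<in> Fq_span q i b" by blast
  then obtain d where d: "\<forall>j<i. d j \<in> Fq q" "x - c * b i = (\<Sum>j<i. d j * b j)"
    unfolding Fq_span_def by blast
  have "(\<Sum>j<i. (d(i := c)) j * b j) = (\<Sum>j<i. d j * b j)" by (rule sum.cong) auto
  then have "x = (\<Sum>j<Suc i. (d(i := c)) j * b j)" using d(2) by (simp add: diff_eq_eq)
  moreover have "\<forall>j<Suc i. (d(i := c)) j \<in> Fq q" using c(1) d(1) by (simp add: less_Suc_eq)
  ultimately show "x \<in> Fq_span q (Suc i) b" unfolding Fq_span_def by blast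
qed

lemma power_q_eq_mult_iff_Fq_multiple:
  "(t::'a) ^ q = u ^ (q - 1) * t \<longleftrightarrow> (\<exists>c\<in>Fq q. t = c * u)"
proof -
  have u_power: "u ^ (q - 1) * u = u ^ q" using q_pos by (simp flip: power_Suc2)
  show ?thesis
  proof
    assume root: "t ^ q = u ^ (q - 1) * t"
    show "\<exists>c\<in>Fq q. t = c * u"
    proof (cases "u = 0")
      case True
      then show ?thesis
        using root q_gt_1 zero_in_Fq by (intro bexI[of _ 0]) (simp_all add: power_0_left)
    next
      case False
      have "(t / u) ^ q = t / u"
        using root False by (simp add: power_divide flip: u_power)
      then show ?thesis using False by (intro bexI[of _ "t / u"]) (simp_all add: Fq_def)
    qed
  next
    assume "\<exists>c\<in>Fq q. t = c * u"
    then obtain c where "c ^ q = c" "t = c * u" unfolding Fq_def by blast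
    then show "t ^ q = u ^ (q - 1) * t"
      by (simp add: power_mult_distrib mult_ac flip: u_power)
  qed
qed

section \<open>Subspace polynomials\<close>

text \<open>The outer factor X^q - L_i(b_i)^(q-1) X of L_(i+1) vanishes exactly on F_q L_i(b_i), so the
  roots of L_(i+1) are the x with x - c b_i a root of L_i for some c in F_q.\<close>

primrec subspace_poly :: "(nat \<Rightarrow> 'a) \<Rightarrow> nat \<Rightarrow> 'a poly" where
  "subspace_poly b 0 = monom 1 1"
| "subspace_poly b (Suc i) =
     pcompose (monom 1 q - monom (poly (subspace_poly b i) (b i) ^ (q - 1)) 1) (subspace_poly b i)"

lemma is_qpoly_subspace_poly: "is_qpoly q (subspace_poly b i)"
proof (induction i)
  case 0 show ?case using is_qpoly_monom[of 1 0] by simp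
next
  case (Suc i)
  have "is_qpoly q (monom (1::'a) q - monom (poly (subspace_poly b i) (b i) ^ (q - 1)) 1)"
    using is_qpoly_monom[of 1 1] is_qpoly_monom[of "poly (subspace_poly b i) (b i) ^ (q - 1)" 0]
    by (intro is_qpoly_diff) simp_all
  then show ?case using Suc by (simp add: is_qpoly_pcompose)
qed

lemma degree_subspace_poly: "degree (subspace_poly b i) = q ^ i"
proof (induction i)
  case (Suc i)
  then show ?case
    using degree_monom_diff_monom_1[OF q_gt_1, of "poly (subspace_poly b i) (b i) ^ (q - 1)"]
    by (simp add: degree_pcompose)
qed (simp add: degree_monom_eq)

lemma subspace_poly_nonzero: "subspace_poly b i \<noteq> 0"
  using degree_subspace_poly[of b i] q_pos by (metis degree_0 power_not_zero less_numeral_extra(3))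

lemma poly_subspace_poly_eq_0_iff: "poly (subspace_poly b i) x = 0 \<longleftrightarrow> x \<in> Fq_span q i b"
proof (induction i arbitrary: x)
  case 0 then show ?case by (simp add: Fq_span_0 poly_monom)
next
  case (Suc i)
  define L where "L = subspace_poly b i"
  define u where "u = poly L (b i)"
  have L: "is_qpoly q L" unfolding L_def by (rule is_qpoly_subspace_poly)
  have "poly (subspace_poly b (Suc i)) x = 0 \<longleftrightarrow> poly L x ^ q = u ^ (q - 1) * poly L x"
    by (simp add: L_def u_def poly_pcompose poly_monom)
  also have "\<dots> \<longleftrightarrow> (\<exists>c\<in>Fq q. poly L x = c * u)"
    by (rule power_q_eq_mult_iff_Fq_multiple)
  also have "\<dots> \<longleftrightarrow> (\<exists>c\<in>Fq q. poly L (x - c * b i) = 0)"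
    by (rule bex_cong[OF refl]) (simp add: u_def poly_qpoly_diff[OF L] poly_qpoly_Fq_mult[OF L])
  also have "\<dots> \<longleftrightarrow> (\<exists>c\<in>Fq q. x - c * b i \<in> Fq_span q i b)"
    using Suc.IH by (simp add: L_def)
  finally show ?case by (simp add: Fq_span_Suc)
qed

end

section \<open>Gabidulin codes intersected with V^n\<close>

lemma Fq_subspace_sum_mult:
  fixes n :: nat and c v :: "nat \<Rightarrow> 'a::field"
  assumes "Fq_subspace q V" "\<forall>j<n. c j \<in> Fq q \<and> v j \<in> V"
  shows "(\<Sum>j<n. c j * v j) \<in> V"
  using assms(2) by (induction n) (use assms(1) in \<open>simp_all add: Fq_subspace_def\<close>)

lemma gabidulin_inter_vpow:
  "gabidulin q n g k \<inter> vpow V n = {map (\<lambda>j. poly F (g j)) [0..<n] | F.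
     is_qpoly q F \<and> (F = 0 \<or> qdeg q F < k) \<and> (\<forall>j<n. poly F (g j) \<in> V)}"
proof -
  have "map (\<lambda>j. poly F (g j)) [0..<n] \<in> vpow V n \<longleftrightarrow> (\<forall>j<n. poly F (g j) \<in> V)" for F
    by (auto simp: vpow_def)
  then show ?thesis unfolding gabidulin_def by blast
qed

context qm_field
begin

lemma Fq_span_eq_UNIV:
  assumes "Fq_lin_indep q m (g :: nat \<Rightarrow> 'a)"
  shows "Fq_span q m g = UNIV"
  by (rule card_subset_eq) (simp_all add: card_Fq_span[OF assms] card)

lemma poly_qpoly_in_subspace:
  fixes F :: "'a poly"
  assumes "Fq_subspace q V" "Fq_span q n g = UNIV" "is_qpoly q F" "\<forall>j<n. poly F (g j) \<in> V"
  shows "poly F x \<in> V"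
proof -
  obtain c where c: "\<forall>i<n. c i \<in> Fq q" "x = (\<Sum>i<n. c i * g i)"
    using assms(2) unfolding Fq_span_def by blast
  then have "poly F x = (\<Sum>i<n. c i * poly F (g i))"
    by (simp add: poly_qpoly_sum[OF assms(3)] poly_qpoly_Fq_mult[OF assms(3)])
  also have "\<dots> \<in> V" using assms(4) c(1) by (intro Fq_subspace_sum_mult[OF assms(1)]) simp
  finally show ?thesis .
qed

lemma subspace_poly_right_cofactor:
  assumes "Fq_lin_indep q s b" "s \<le> m"
  shows "\<exists>Q. is_qpoly q Q \<and> Q \<noteq> 0 \<and> qdeg q Q = m - s \<and> pcompose (subspace_poly b s) Q = Xqm"
proof -
  define L where "L = subspace_poly b s"
  have L: "is_qpoly q L" "degree L = q ^ s" "L \<noteq> 0"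
    using is_qpoly_subspace_poly degree_subspace_poly subspace_poly_nonzero by (simp_all add: L_def)
  have "degree L \<le> card (Fq_span q s b)" by (simp add: L(2) card_Fq_span[OF assms(1)])
  then obtain Q where Q: "is_qpoly q Q" "Xqm = pcompose Q L"
    using qpoly_right_dvd_if_vanishing[OF is_qpoly_Xqm L(1,3)] poly_Xqm
    by (metis L_def poly_subspace_poly_eq_0_iff)
  \<comment> \<open>Q \<circ> L = Xqm forces L \<circ> Q = Xqm, since Xqm is central and L can be cancelled on the right.\<close>
  have "pcompose (pcompose L Q) L = pcompose L (pcompose Q L)" by (simp add: pcompose_assoc)
  also have "\<dots> = pcompose Xqm L" using Q(2) pcompose_Xqm_commute[OF L(1)] by simp
  finally have "pcompose (pcompose L Q - Xqm) L = 0" by (simp add: pcompose_diff)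
  then have LQ: "pcompose L Q = Xqm"
    using pcompose_eq_0 L(2) q_pos by fastforce
  have "Q \<noteq> 0" using Q(2) Xqm_nonzero by auto
  moreover have "q ^ m = q ^ (qdeg q Q + s)"
    using degree_Xqm Q(2) L(2) degree_qpoly[OF Q(1) \<open>Q \<noteq> 0\<close>] by (simp add: degree_pcompose power_add)
  ultimately show ?thesis using Q(1) LQ by (auto simp: power_q_inject L_def)
qed

lemma qpoly_factors_through_cofactor:
  assumes "is_qpoly q L" "L \<noteq> 0" "is_qpoly q Q" "pcompose L Q = Xqm"
    and "is_qpoly q F" "\<And>x. poly L (poly F x) = 0"
  shows "\<exists>A. is_qpoly q A \<and> F = pcompose Q A"
proof -
  have "degree Xqm \<le> card (UNIV :: 'a set)" by (simp add: degree_Xqm card)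
  then obtain A where A: "is_qpoly q A" "pcompose L F = pcompose A Xqm"
    using qpoly_right_dvd_if_vanishing[OF is_qpoly_pcompose[OF assms(1,5)] is_qpoly_Xqm Xqm_nonzero]
      poly_Xqm assms(6) by (metis poly_pcompose)
  then have "pcompose L F = pcompose L (pcompose Q A)"
    by (simp add: pcompose_Xqm_commute pcompose_assoc assms(4))
  then have "F = pcompose Q A"
    by (rule pcompose_qpoly_left_cancel[OF assms(1,2,5) is_qpoly_pcompose[OF assms(3) A(1)]])
  then show ?thesis using A(1) by blast
qed

lemma qdeg_pcompose_less_iff:
  assumes "is_qpoly q (Q::'a poly)" "Q \<noteq> 0" "is_qpoly q A"
  shows "(pcompose Q A = 0 \<or> qdeg q (pcompose Q A) < k) \<longleftrightarrow>
    (A = 0 \<or> int (qdeg q A) < int k - int (qdeg q Q))"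
proof (cases "A = 0")
  case True
  then show ?thesis by (simp add: pcompose_0' qpoly_coeff_0[OF assms(1)])
next
  case False
  then show ?thesis using qdeg_pcompose[OF assms False] by linarith
qed

lemma qpoly_maps_into_subspace_iff_factors:
  assumes "Fq_subspace q V" "Fq_span q n g = UNIV"
    and L: "is_qpoly q L" "L \<noteq> 0" "\<And>x. poly L x = 0 \<longleftrightarrow> x \<in> V"
    and Q: "is_qpoly q Q" "pcompose L Q = Xqm"
    and F: "is_qpoly q F"
  shows "(\<forall>j<n. poly F (g j) \<in> V) \<longleftrightarrow> (\<exists>A. is_qpoly q A \<and> F = pcompose Q A)"
proof
  assume "\<forall>j<n. poly F (g j) \<in> V"
  then have "poly L (poly F x) = 0" for x
    using poly_qpoly_in_subspace[OF assms(1,2) F] L(3) by blast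
  then show "\<exists>A. is_qpoly q A \<and> F = pcompose Q A"
    by (rule qpoly_factors_through_cofactor[OF L(1,2) Q F])
next
  have "poly Q y \<in> V" for y
    using L(3) poly_Xqm[of y] Q(2) by (metis poly_pcompose)
  moreover assume "\<exists>A. is_qpoly q A \<and> F = pcompose Q A"
  ultimately show "\<forall>j<n. poly F (g j) \<in> V" by (auto simp: poly_pcompose)
qed

lemma gabidulin_inter_vpow_eq_pcompose:
  assumes "Fq_subspace q V" "Fq_span q n g = UNIV"
    and L: "is_qpoly q L" "L \<noteq> 0" "\<And>x. poly L x = 0 \<longleftrightarrow> x \<in> V"
    and Q: "is_qpoly q Q" "Q \<noteq> 0" "pcompose L Q = Xqm"
  shows "gabidulin q n g k \<inter> vpow V n =
    {map (\<lambda>j. poly Q (poly A (g j))) [0..<n] | A.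
       is_qpoly q A \<and> (A = 0 \<or> int (qdeg q A) < int k - int (qdeg q Q))}"
proof -
  have "is_qpoly q F \<and> (F = 0 \<or> qdeg q F < k) \<and> (\<forall>j<n. poly F (g j) \<in> V) \<longleftrightarrow>
      (\<exists>A. F = pcompose Q A \<and> is_qpoly q A \<and> (A = 0 \<or> int (qdeg q A) < int k - int (qdeg q Q)))"
    (is "?codeword F \<longleftrightarrow> (\<exists>A. F = pcompose Q A \<and> ?admissible A)") for F
  proof
    assume F: "?codeword F"
    then obtain A where A: "is_qpoly q A" "F = pcompose Q A"
      using qpoly_maps_into_subspace_iff_factors[OF assms(1,2) L Q(1,3)] by blast
    then show "\<exists>A. F = pcompose Q A \<and> ?admissible A"
      using F qdeg_pcompose_less_iff[OF Q(1,2) A(1), of k] by blast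
  next
    assume "\<exists>A. F = pcompose Q A \<and> ?admissible A"
    then obtain A where A: "F = pcompose Q A" "is_qpoly q A"
      "A = 0 \<or> int (qdeg q A) < int k - int (qdeg q Q)" by blast
    then have "is_qpoly q F" using is_qpoly_pcompose[OF Q(1)] by blast
    then show "?codeword F"
      using A qdeg_pcompose_less_iff[OF Q(1,2) A(2), of k]
        qpoly_maps_into_subspace_iff_factors[OF assms(1,2) L Q(1,3)] by blast
  qed
  then have "{map (\<lambda>j. poly F (g j)) [0..<n] | F. ?codeword F} =
      {map (\<lambda>j. poly (pcompose Q A) (g j)) [0..<n] | A. ?admissible A}"
    by (simp only:) blast
  then show ?thesis unfolding gabidulin_inter_vpow by (simp add: poly_pcompose)
qed

end

theorem mainTheorem4:
  fixes q m n k s :: nat and g :: "nat \<Rightarrow> 'a::{finite,field}" and V :: "'a set"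
  assumes card: "card (UNIV :: 'a set) = q ^ m"
    and mn: "m = n"
    and indep: "Fq_lin_indep q n g"
    and k: "1 \<le> k" "k \<le> n"
    and sub: "Fq_subspace q V" and dim: "Fq_dim q V s"
    and s: "0 < s" "s < m"
  shows "\<exists>Q. is_qpoly q Q \<and> Q \<noteq> 0 \<and> qdeg q Q = m - s \<and>
     gabidulin q n g k \<inter> vpow V n =
       {map (\<lambda>j. poly Q (poly A (g j))) [0..<n] | A.
          is_qpoly q A \<and> (A = 0 \<or> int (qdeg q A) < int k - int (m - s))}"
proof -
  interpret qm_field q m "TYPE('a)" using card s by unfold_locales simp_all
  obtain b where b: "Fq_lin_indep q s b" "Fq_span q s b = V"
    using dim unfolding Fq_dim_def by blast
  define L where "L = subspace_poly b s"
  have L: "is_qpoly q L" "L \<noteq> 0" "\<And>x. poly L x = 0 \<longleftrightarrow> x \<in> V"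
    using is_qpoly_subspace_poly subspace_poly_nonzero poly_subspace_poly_eq_0_iff b(2)
    by (simp_all add: L_def)
  obtain Q where Q: "is_qpoly q Q" "Q \<noteq> 0" "qdeg q Q = m - s" "pcompose L Q = Xqm"
    using subspace_poly_right_cofactor[OF b(1)] s(2) unfolding L_def by auto
  have "Fq_span q n g = UNIV" using Fq_span_eq_UNIV indep mn by simp
  then show ?thesis
    using gabidulin_inter_vpow_eq_pcompose[OF sub _ L Q(1,2,4)] Q(1-3) by auto
qed

end
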